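(* Let $N\in\mathbb N$ and let $X$ be a real Banach space of dimension $2^N+1$ with a dual skipped 1-unconditional basis $(f_k)_{k=1}^{2^N+1}$. Suppose $\mathrm{ubc}(f_1,f_{2^N+1})=\mu>1$. Then $\mathrm{ubc}(f_j)_{j=1}^{2^N+1}\ge1+2^N(\mu-1)$.
   Context: A basic sequence $(e_k)_{k=1}^N$ ($1\le N\le\infty$) is skipped $\lambda$-unconditional if whenever $0=m_0<m_1<\dots<m_n<\infty$ with $m_j-m_{j-1}\ge2$ for $1\le j\le n$, and $y_j\in[e_i]_{i=m_{j-1}+1}^{m_j-1}$ (spans taken only over indices $i\le N$), then $\|\sum_{j=1}^n\epsilon_jy_j\|\le\lambda\|\sum_{j=1}^ny_j\|$ for all signs $\epsilon_j=\pm1$. A basis $(f_k)_{k=1}^M$ of a finite-dimensional space $F$ is dual skipped $\lambda$-unconditional if its dual (biorthogonal) basis $(f_k^* )_{k=1}^M$ in $F^*$ is skipped $\lambda$-unconditional. For a finite linearly independent sequence $(f_j)_{j\in A}$, $\mathrm{ubc}(f_j)_{j\in A}$ is the least $K$ such that $\|\sum_{j\in A}\epsilon_ja_jf_j\|\le K\|\sum_{j\in A}a_jf_j\|$ for all scalars $a_j$ and signs $\epsilon_j=\pm1$. *)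

theory Defs
  imports "HOL-Analysis.Analysis"
begin

definition skipped_uncond :: "real \<Rightarrow> nat \<Rightarrow> (nat \<Rightarrow> 'b::real_normed_vector) \<Rightarrow> bool" where
  "skipped_uncond lam L e \<longleftrightarrow>
     (\<forall>(n::nat) (m::nat \<Rightarrow> nat) (y::nat \<Rightarrow> 'b) (eps::nat \<Rightarrow> real).
        m 0 = 0 \<and> (\<forall>j\<in>{1..n}. m (j - 1) + 2 \<le> m j)
        \<and> (\<forall>j\<in>{1..n}. y j \<in> span (e ` {i. m (j - 1) < i \<and> i < m j \<and> i \<le> L}))
        \<and> (\<forall>j. eps j \<in> {-1, 1})
        \<longrightarrow> norm (\<Sum>j=1..n. eps j *\<^sub>R y j) \<le> lam * norm (\<Sum>j=1..n. y j))"

definition ubc :: "(nat \<Rightarrow> 'a::real_normed_vector) \<Rightarrow> nat set \<Rightarrow> real" where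
  "ubc f A = Inf {K. \<forall>(a::nat \<Rightarrow> real) (eps::nat \<Rightarrow> real). (\<forall>j. eps j \<in> {-1, 1}) \<longrightarrow>
      norm (\<Sum>j\<in>A. (eps j * a j) *\<^sub>R f j) \<le> K * norm (\<Sum>j\<in>A. a j *\<^sub>R f j)}"

end

(*
  Fix any unconditionality bound K of the whole basis, i.e. every sign change ("flip") of
  coordinates costs at most the factor K.  The proof has three layers.

  1. Duality (finite-dimensional Hahn-Banach).  For a skipped block decomposition and signs
     eps j, every z is approximated, up to any delta > 0 in norm, by a vector z' whose
     coordinates on block j are eps j times those of z, while the coordinates at the skipped
     indices are free.  The distance from the sign-changed vector to the span of the skipped
     basis vectors is normed by a functional; splitting it into its block pieces and using the
     skipped 1-unconditionality of the dual basis bounds that distance by norm z.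
  2. Dyadic induction.  For z supported on the indices i with 2^k dvd (i - 1), flipping the
     signs at the odd multiples of 2^k costs at most 1 + (K - 1) / 2^k.  In the step, blocks of
     length 2^(k+1) - 1 centred at the multiples of 2^(k+1), separated by the odd multiples of
     2^k and carrying alternating signs, give z'; the average of z' and its level-k flip is
     exactly the level-(k+1) flip of z.
  3. At level N, the flip of a f 1 + b f L is a f 1 - b f L, so (1 + (K - 1) / 2^N) bounds
     ubc (f 1, f L) = mu, i.e. K >= 1 + 2^N (mu - 1); take the infimum over K.
*)

theory Submission
  imports Defs
begin

section \<open>Finite-dimensional Hahn-Banach theorem\<close>

lemma functional_vanishing_on_subspace:
  fixes V :: "'a::real_vector set"
  assumes V: "subspace V" and b: "b \<notin> V"
  shows "\<exists>l::'a \<Rightarrow> real. linear l \<and> (\<forall>v\<in>V. l v = 0) \<and> l b = 1"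
proof -
  obtain B where B: "B \<subseteq> V" "independent B" "V \<subseteq> span B"
    by (rule basis_exists)
  have span_B: "span B = V" using span_minimal[OF B(1) V] B(3) by (rule subset_antisym)
  then have "independent (insert b B)" using B(2) b by (simp add: independent_insert)
  then obtain l :: "'a \<Rightarrow> real" where l: "linear l" "\<forall>x\<in>insert b B. l x = (if x = b then 1 else 0)"
    using linear_independent_extend[of "insert b B" "\<lambda>x. if x = b then 1 else 0"] by blast
  have "l v = 0" if "v \<in> V" for v
  proof (rule linear_eq_0_on_span[OF l(1)])
    show "v \<in> span B" using that span_B by simp
  next
    fix x assume "x \<in> B"
    then show "l x = 0" using l(2) b B(1) by auto
  qed
  then show ?thesis using l by auto
qed

lemma hahn_banach_admissible_value:
  fixes V :: "'a::real_normed_vector set"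
  assumes V: "subspace V" and g: "linear g" and g_le: "\<forall>v\<in>V. g v \<le> norm v" and b: "b \<notin> V"
    and c_le: "\<And>w. w \<in> V \<Longrightarrow> c \<le> norm (w + b) - g w"
    and c_ge: "\<And>w. w \<in> V \<Longrightarrow> g w - norm (w - b) \<le> c"
  shows "\<exists>h. linear h \<and> (\<forall>v\<in>V. h v = g v) \<and> (\<forall>u\<in>span (insert b V). h u \<le> norm u) \<and> h b = c"
proof -
  obtain l :: "'a \<Rightarrow> real" where l: "linear l" "\<forall>v\<in>V. l v = 0" "l b = 1"
    using functional_vanishing_on_subspace[OF V b] by blast
  define h where "h x = g x + (c - g b) * l x" for x
  have lin_h: "linear h"
    unfolding h_def by (rule linearI)
      (simp_all add: linear_add[OF g] linear_add[OF l(1)] linear_scale[OF g] linear_scale[OF l(1)] algebra_simps)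
  have h_decomp: "h (v + t *\<^sub>R b) = g v + t * c" if "v \<in> V" for v t
    using l that by (simp add: h_def linear_add[OF g] linear_add[OF l(1)] linear_scale[OF g]
        linear_scale[OF l(1)] algebra_simps)
  have "h u \<le> norm u" if u: "u \<in> span (insert b V)" for u
  proof -
    obtain t where t: "u - t *\<^sub>R b \<in> span V" using u span_breakdown_eq by blast
    define v where "v = u - t *\<^sub>R b"
    have v: "v \<in> V" using t V by (simp add: v_def span_eq_iff[THEN iffD2])
    have u_eq: "u = v + t *\<^sub>R b" by (simp add: v_def)
    consider "t = 0" | "t > 0" | "t < 0" by linarith
    then show ?thesis
    proof cases
      case 1
      then show ?thesis using h_decomp[OF v, of 0] g_le v u_eq by simp
    next
      case 2
      define w where "w = (1/t) *\<^sub>R v"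
      have w: "w \<in> V" using V v by (simp add: w_def subspace_scale)
      have "u = t *\<^sub>R (w + b)" using 2 by (simp add: w_def u_eq scaleR_add_right)
      then have "norm u - g v = t * (norm (w + b) - g w)"
        using 2 by (simp add: w_def linear_scale[OF g] right_diff_distrib)
      then have "t * c \<le> norm u - g v" using c_le[OF w] 2 by simp
      then show ?thesis using h_decomp[OF v] u_eq by simp
    next
      case 3
      define w where "w = (-1/t) *\<^sub>R v"
      have w: "w \<in> V" using V v by (simp only: w_def subspace_scale)
      have "u = (-t) *\<^sub>R (w - b)" using 3 by (simp add: w_def u_eq scaleR_diff_right)
      then have "g v - norm u = (-t) * (g w - norm (w - b))"
        using 3 by (simp add: w_def linear_scale[OF g] linear_neg[OF g] right_diff_distrib)
      then have "g v - norm u \<le> - t * c" using c_ge[OF w] 3 by simp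
      then show ?thesis using h_decomp[OF v] u_eq by simp
    qed
  qed
  moreover have "h b = c" using h_decomp[OF subspace_0[OF V], of 1] linear_0[OF g] by simp
  ultimately show ?thesis using lin_h l(2) by (auto simp: h_def)
qed

(* The window is nonempty by the triangle inequality; we take its upper end, which for g = 0
   is the distance from b to V. *)
lemma hahn_banach_one_step:
  fixes V :: "'a::real_normed_vector set"
  assumes V: "subspace V" and g: "linear g" and g_le: "\<forall>v\<in>V. g v \<le> norm v" and b: "b \<notin> V"
  shows "\<exists>h. linear h \<and> (\<forall>v\<in>V. h v = g v) \<and> (\<forall>u\<in>span (insert b V). h u \<le> norm u)
           \<and> h b = Inf {norm (w + b) - g w | w. w \<in> V}"
proof (rule hahn_banach_admissible_value[OF V g g_le b])
  have gap: "g w - norm (w - b) \<le> norm (w' + b) - g w'" if "w \<in> V" "w' \<in> V" for w w'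
  proof -
    have "g w + g w' = g (w + w')" by (simp add: linear_add[OF g])
    also have "\<dots> \<le> norm (w + w')" using g_le that V by (simp add: subspace_add)
    also have "\<dots> \<le> norm (w - b) + norm (w' + b)"
      using norm_triangle_ineq[of "w - b" "w' + b"] by simp
    finally show ?thesis by simp
  qed
  have "- norm b \<le> norm (w + b) - g w" if "w \<in> V" for w
    using gap[OF subspace_0[OF V] that] linear_0[OF g] by simp
  then have "bdd_below {norm (w + b) - g w | w. w \<in> V}" by (intro bdd_belowI) blast
  then show "Inf {norm (w + b) - g w | w. w \<in> V} \<le> norm (w + b) - g w" if "w \<in> V" for w
    using that by (intro cInf_lower) blast+
  show "g w - norm (w - b) \<le> Inf {norm (w + b) - g w | w. w \<in> V}" if "w \<in> V" for w
    using that subspace_0[OF V] gap by (intro cInf_greatest) blast+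
qed

lemma hahn_banach_finite_extension:
  fixes B :: "'a::real_normed_vector set"
  assumes "finite B" and "subspace V" and "linear g" and "\<forall>v\<in>V. g v \<le> norm v"
  shows "\<exists>h. linear h \<and> (\<forall>v\<in>V. h v = g v) \<and> (\<forall>u\<in>span (V \<union> B). h u \<le> norm u)"
  using assms
proof (induction B arbitrary: V g rule: finite_induct)
  case empty
  then have "span V = V" by simp
  then show ?case using empty by (intro exI[of _ g]) (simp del: span_eq_iff)
next
  case (insert b B)
  obtain h1 where h1: "linear h1" "\<forall>v\<in>V. h1 v = g v" "\<forall>u\<in>span (insert b V). h1 u \<le> norm u"
  proof (cases "b \<in> V")
    case True
    then have "span (insert b V) = V" using insert.prems(1) by (simp add: span_redundant span_base)
    then show ?thesis using that insert.prems by auto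
  next
    case False
    then show ?thesis using hahn_banach_one_step[OF insert.prems False] that by blast
  qed
  obtain h where h: "linear h" "\<forall>v\<in>span (insert b V). h v = h1 v"
      "\<forall>u\<in>span (span (insert b V) \<union> B). h u \<le> norm u"
    using insert.IH[OF subspace_span h1(1)] h1(3) by blast
  have "span (span (insert b V) \<union> B) = span (insert b V \<union> B)"
    by (simp only: span_Un span_span)
  also have "insert b V \<union> B = V \<union> insert b B" by auto
  finally show ?case using h h1(2) by (auto simp: span_base)
qed

lemma distance_functional:
  fixes W F :: "'a::real_normed_vector set"
  assumes W: "subspace W" and F: "finite F" "span F = UNIV"
  shows "\<exists>\<phi> :: 'a \<Rightarrow>\<^sub>L real. norm \<phi> \<le> 1 \<and> (\<forall>w\<in>W. blinfun_apply \<phi> w = 0)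
           \<and> blinfun_apply \<phi> v = Inf {norm (w + v) | w. w \<in> W}"
proof -
  obtain h where h: "linear h" "\<forall>w\<in>W. h w = 0" "\<forall>u. h u \<le> norm u"
    "h v = Inf {norm (w + v) | w. w \<in> W}"
  proof (cases "v \<in> W")
    case True
    have "Inf {norm (w + v) | w. w \<in> W} = 0"
    proof (rule antisym)
      show "Inf {norm (w + v) | w. w \<in> W} \<le> 0"
        using True W by (intro cInf_lower2[of 0] bdd_belowI[of _ 0]) (auto intro!: exI[of _ "- v"] simp: subspace_neg)
      show "0 \<le> Inf {norm (w + v) | w. w \<in> W}"
        using W by (intro cInf_greatest) (auto dest: subspace_0)
    qed
    then show ?thesis using that[of "\<lambda>_. 0"] by (simp add: linear_zero)
  next
    case False
    obtain h1 where h1: "linear h1" "\<forall>w\<in>W. h1 w = 0" "\<forall>u\<in>span (insert v W). h1 u \<le> norm u"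
        "h1 v = Inf {norm (w + v) | w. w \<in> W}"
      using hahn_banach_one_step[OF W linear_zero, of v] False by auto
    obtain h where "linear h" "\<forall>u\<in>span (insert v W). h u = h1 u"
        "\<forall>u\<in>span (span (insert v W) \<union> F). h u \<le> norm u"
      using hahn_banach_finite_extension[OF F(1) subspace_span h1(1)] h1(3) by blast
    moreover have "span (span (insert v W) \<union> F) = UNIV"
      using F(2) span_mono[of F "span (insert v W) \<union> F"] by auto
    ultimately show ?thesis using that h1 by (auto simp: span_base)
  qed
  have abs_h: "\<bar>h u\<bar> \<le> norm u" for u
    using h(3)[rule_format, of u] h(3)[rule_format, of "- u"] by (simp add: linear_neg[OF h(1)])
  have "bounded_linear h"
    using abs_h by (intro bounded_linear_intro[where K=1]) (simp_all add: linear_add[OF h(1)] linear_scale[OF h(1)])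
  then have h_apply: "blinfun_apply (Blinfun h) = h" by (rule bounded_linear_Blinfun_apply)
  have "norm (Blinfun h) \<le> 1"
    using abs_h by (intro norm_blinfun_bound) (simp_all add: h_apply)
  then show ?thesis using h h_apply by (intro exI[of _ "Blinfun h"]) auto
qed

section \<open>Skipped block decompositions\<close>

definition skip_block :: "nat \<Rightarrow> (nat \<Rightarrow> nat) \<Rightarrow> nat \<Rightarrow> nat set" where
  "skip_block L m j = {i. m (j - 1) < i \<and> i < m j \<and> i \<le> L}"

lemma skip_block_subset: "skip_block L m j \<subseteq> {1..L}"
  by (auto simp: skip_block_def)

lemma skip_blocks_disjoint:
  assumes increasing: "\<forall>j\<in>{1..n}. m (j - 1) < m j"
  shows "\<forall>j\<in>{1..n}. \<forall>j'\<in>{1..n}. j \<noteq> j' \<longrightarrow> skip_block L m j \<inter> skip_block L m j' = {}"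
proof -
  have mono: "m i \<le> m k" if "i \<le> k" "k \<le> n" for i k
    using that
  proof (induction k rule: dec_induct)
    case (step k)
    then show ?case using increasing[rule_format, of "Suc k"] by simp
  qed simp
  have ordered: "skip_block L m j \<inter> skip_block L m j' = {}"
    if "j < j'" "j \<in> {1..n}" "j' \<in> {1..n}" for j j'
  proof -
    have "m j \<le> m (j' - 1)" using mono that by simp
    then show ?thesis by (auto simp: skip_block_def)
  qed
  show ?thesis
  proof (intro ballI impI)
    fix j j' assume "j \<in> {1..n}" "j' \<in> {1..n}" "j \<noteq> j'"
    then show "skip_block L m j \<inter> skip_block L m j' = {}"
      using ordered[of j j'] ordered[of j' j] by (cases "j < j'") auto
  qed
qed


section \<open>Unconditional basis constants\<close>

definition ubc_bound :: "(nat \<Rightarrow> 'a::real_normed_vector) \<Rightarrow> nat set \<Rightarrow> real \<Rightarrow> bool" where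
  "ubc_bound f A K \<longleftrightarrow> (\<forall>(a::nat \<Rightarrow> real) (eps::nat \<Rightarrow> real). (\<forall>j. eps j \<in> {-1, 1}) \<longrightarrow>
      norm (\<Sum>j\<in>A. (eps j * a j) *\<^sub>R f j) \<le> K * norm (\<Sum>j\<in>A. a j *\<^sub>R f j))"

lemma ubc_eq_Inf: "ubc f A = Inf {K. ubc_bound f A K}"
  by (simp add: ubc_def ubc_bound_def)

lemma ubc_bound_ge_one:
  assumes "ubc_bound f A K" "finite A" "j \<in> A" "f j \<noteq> 0"
  shows "1 \<le> K"
proof -
  define a :: "nat \<Rightarrow> real" where "a i = (if i = j then 1 else 0)" for i
  have "(\<Sum>i\<in>A. a i *\<^sub>R f i) = (\<Sum>i\<in>A. if i = j then f i else 0)"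
    by (intro sum.cong) (auto simp: a_def)
  also have "\<dots> = f j" using assms(2,3) by simp
  finally have sum_a: "(\<Sum>i\<in>A. a i *\<^sub>R f i) = f j" .
  have "norm (f j) \<le> K * norm (f j)"
    using assms(1)[unfolded ubc_bound_def, rule_format, of "\<lambda>_. 1" a] sum_a by simp
  then show ?thesis using assms(4) by simp
qed

lemma ubc_le_bound:
  assumes "ubc_bound f A K" "finite A" "j \<in> A" "f j \<noteq> 0"
  shows "ubc f A \<le> K"
  unfolding ubc_eq_Inf using assms ubc_bound_ge_one[of f A _ j]
  by (intro cInf_lower bdd_belowI[of _ 1]) auto

lemma ubc_ge_lower_bound:
  assumes "\<exists>K. ubc_bound f A K" "\<And>K. ubc_bound f A K \<Longrightarrow> c \<le> K"
  shows "c \<le> ubc f A"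
  unfolding ubc_eq_Inf using assms by (intro cInf_greatest) auto

(* For two vectors only the relative sign matters. *)
lemma ubc_bound_pair:
  assumes "p \<noteq> q" "1 \<le> c"
    and pair: "\<And>a b. norm (a *\<^sub>R f p - b *\<^sub>R f q) \<le> c * norm (a *\<^sub>R f p + b *\<^sub>R f q)"
  shows "ubc_bound f {p, q} c"
  unfolding ubc_bound_def
proof (intro allI impI)
  fix a eps :: "nat \<Rightarrow> real" assume eps: "\<forall>j. eps j \<in> {-1, 1}"
  define x where "x = a p *\<^sub>R f p + a q *\<^sub>R f q"
  have abs_eps: "\<bar>eps p\<bar> = 1" using eps[rule_format, of p] by auto
  consider "eps q = eps p" | "eps q = - eps p"
    using eps[rule_format, of p] eps[rule_format, of q] by auto
  then have "norm ((eps p * a p) *\<^sub>R f p + (eps q * a q) *\<^sub>R f q) \<le> c * norm x"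
  proof cases
    case 1
    then have "(eps p * a p) *\<^sub>R f p + (eps q * a q) *\<^sub>R f q = eps p *\<^sub>R x"
      by (simp add: x_def scaleR_add_right)
    then show ?thesis using abs_eps assms(2) by (simp add: mult_le_cancel_right1)
  next
    case 2
    then have "(eps p * a p) *\<^sub>R f p + (eps q * a q) *\<^sub>R f q
        = eps p *\<^sub>R (a p *\<^sub>R f p - a q *\<^sub>R f q)"
      by (simp add: scaleR_diff_right)
    then show ?thesis using abs_eps pair[of "a p" "a q"] by (simp add: x_def)
  qed
  then show "norm (\<Sum>j\<in>{p, q}. (eps j * a j) *\<^sub>R f j) \<le> c * norm (\<Sum>j\<in>{p, q}. a j *\<^sub>R f j)"
    using assms(1) by (simp add: x_def)
qed


section \<open>Dyadic arithmetic\<close>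

(* With h = 2^k: the skipped decomposition with endpoints m j = (2j - 1) h + 1, whose
   skipped indices i are those with i - 1 an odd multiple of h, and whose j-th block is
   centred at i - 1 = 2 (j - 1) h; dyadic_block h (i - 1) is the block containing i. *)
definition dyadic_ends :: "nat \<Rightarrow> nat \<Rightarrow> nat" where
  "dyadic_ends h j = (if j = 0 then 0 else (2 * j - 1) * h + 1)"

definition dyadic_block :: "nat \<Rightarrow> nat \<Rightarrow> nat" where
  "dyadic_block h p = (p + h) div (2 * h) + 1"

lemma dyadic_ends_Suc: "dyadic_ends h (Suc t) = (2 * t + 1) * h + 1"
  by (simp add: dyadic_ends_def)

lemma dyadic_ends_gaps:
  assumes "h > 0" "j \<ge> 1"
  shows "dyadic_ends h (j - 1) + 2 \<le> dyadic_ends h j"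
proof -
  obtain t where j: "j = Suc t" using assms(2) by (cases j) auto
  show ?thesis
  proof (cases t)
    case (Suc s)
    then show ?thesis using assms(1) by (simp add: j dyadic_ends_Suc algebra_simps)
  qed (use assms(1) in \<open>simp add: j dyadic_ends_def\<close>)
qed

lemma dyadic_block_bounds:
  assumes h: "h > 0" and p: "p mod (2 * h) \<noteq> h"
  shows "dyadic_ends h (dyadic_block h p - 1) < p + 1" "p + 1 < dyadic_ends h (dyadic_block h p)"
proof -
  define q where "q = (p + h) div (2 * h)"
  define r where "r = (p + h) mod (2 * h)"
  have block: "dyadic_block h p = Suc q" by (simp add: dyadic_block_def q_def)
  have ph: "p + h = 2 * h * q + r" by (simp add: q_def r_def)
  have r: "r < 2 * h" using h by (simp add: r_def)
  show "p + 1 < dyadic_ends h (dyadic_block h p)"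
    using ph r by (simp add: block dyadic_ends_Suc algebra_simps)
  show "dyadic_ends h (dyadic_block h p - 1) < p + 1"
  proof (cases q)
    case (Suc s)
    have "r \<noteq> 0"
    proof
      assume "r = 0"
      then have "p = h + 2 * h * s" using ph Suc by (simp add: algebra_simps)
      then have "p mod (2 * h) = h" using h by simp
      then show False using p by simp
    qed
    moreover have "dyadic_ends h (dyadic_block h p - 1) = (2 * s + 1) * h + 1"
      by (simp add: block Suc dyadic_ends_Suc)
    ultimately show ?thesis using ph Suc by (simp add: algebra_simps)
  qed (simp add: block dyadic_ends_def)
qed

lemma dyadic_block_le:
  assumes "h > 0"
  shows "dyadic_block h p \<le> p + 1"
proof -
  have "p \<le> h * p" using assms by simp
  then have "p + h < 2 * (h * p) + 2 * h" using assms by linarith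
  then have "p + h < (p + 1) * (2 * h)" by (simp add: algebra_simps)
  then have "(p + h) div (2 * h) < p + 1" by (rule less_mult_imp_div_less)
  then show ?thesis by (simp add: dyadic_block_def)
qed

lemma dyadic_block_mem:
  assumes h: "h > 0" and i: "i \<in> {1..L}" and off: "(i - 1) mod (2 * h) \<noteq> h"
  shows "dyadic_block h (i - 1) \<in> {1..L}" "i \<in> skip_block L (dyadic_ends h) (dyadic_block h (i - 1))"
proof -
  have "1 \<le> dyadic_block h (i - 1)" by (simp add: dyadic_block_def)
  moreover have "dyadic_block h (i - 1) \<le> i" using dyadic_block_le[OF h, of "i - 1"] i by simp
  ultimately show "dyadic_block h (i - 1) \<in> {1..L}" using i by simp
  show "i \<in> skip_block L (dyadic_ends h) (dyadic_block h (i - 1))"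
    using dyadic_block_bounds[OF h off] i by (simp add: skip_block_def)
qed

lemma dyadic_block_multiple:
  assumes "h > 0" "2 * h dvd p"
  shows "dyadic_block h p = p div (2 * h) + 1"
proof -
  obtain q where "p = 2 * h * q" using assms(2) by blast
  then show ?thesis using assms(1) by (simp add: dyadic_block_def add.commute[of _ h])
qed

definition dyadic_level :: "nat \<Rightarrow> nat set" where
  "dyadic_level k = {i. (i - 1) mod 2 ^ Suc k = 2 ^ k}"

lemma dyadic_level_not_grid:
  assumes "i \<in> dyadic_level k"
  shows "\<not> 2 ^ Suc k dvd (i - 1)"
  using assms by (auto simp: dyadic_level_def)

lemma off_grid_not_level:
  fixes p :: nat
  assumes "\<not> 2 ^ k dvd p"
  shows "p mod (2 * 2 ^ k) \<noteq> 2 ^ k"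
proof
  assume "p mod (2 * 2 ^ k) = 2 ^ k"
  then have "p = 2 ^ k * (2 * (p div (2 * 2 ^ k)) + 1)"
    using div_mult_mod_eq[of p "2 * 2 ^ k"] by (simp add: algebra_simps)
  then show False using assms by (metis dvd_triv_left)
qed

lemma grid_level_Suc:
  assumes "2 ^ Suc k dvd (i - 1)"
  shows "i \<in> dyadic_level (Suc k) \<longleftrightarrow> odd ((i - 1) div 2 ^ Suc k)"
proof -
  have "(i - 1) mod (2 ^ Suc k * 2) = 2 ^ Suc k * ((i - 1) div 2 ^ Suc k mod 2)"
    using mod_mult2_eq[of "i - 1" "2 ^ Suc k" 2] assms by simp
  then show ?thesis by (auto simp: dyadic_level_def mult.commute[of _ 2] odd_iff_mod_2_eq_one)
qed


section \<open>A basis of a finite-dimensional space with its dual basis\<close>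

locale dual_basis =
  fixes L :: nat and f :: "nat \<Rightarrow> 'a::real_normed_vector" and fs :: "nat \<Rightarrow> ('a \<Rightarrow>\<^sub>L real)"
  assumes spanning: "span (f ` {1..L}) = UNIV"
    and biorthogonal: "\<And>k j. k \<in> {1..L} \<Longrightarrow> j \<in> {1..L} \<Longrightarrow>
                         blinfun_apply (fs k) (f j) = (if k = j then 1 else 0)"
begin

lemma basis_nonzero: "i \<in> {1..L} \<Longrightarrow> f i \<noteq> 0"
  using biorthogonal[of i i] by auto

lemma basis_inj: "inj_on f {1..L}"
  using biorthogonal by (intro inj_onI) (metis zero_neq_one)

lemma coord_sum_subset:
  assumes "k \<in> {1..L}" "B \<subseteq> {1..L}"
  shows "fs k (\<Sum>i\<in>B. a i *\<^sub>R f i) = (if k \<in> B then a k else 0)"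
proof -
  have "fs k (\<Sum>i\<in>B. a i *\<^sub>R f i) = (\<Sum>i\<in>B. if k = i then a i else 0)"
    unfolding blinfun.sum_right using assms biorthogonal
    by (intro sum.cong) (auto simp: blinfun.scaleR_right)
  also have "\<dots> = (if k \<in> B then a k else 0)"
    using finite_subset[OF assms(2)] by simp
  finally show ?thesis .
qed

lemma coord_sum: "k \<in> {1..L} \<Longrightarrow> fs k (\<Sum>i\<in>{1..L}. a i *\<^sub>R f i) = a k"
  using coord_sum_subset[of k "{1..L}"] by simp

lemma expansion: "z = (\<Sum>i\<in>{1..L}. fs i z *\<^sub>R f i)"
proof -
  have "z \<in> span (f ` {1..L})" using spanning by simp
  then obtain u where "z = (\<Sum>v\<in>f ` {1..L}. u v *\<^sub>R v)"
    using span_finite[of "f ` {1..L}"] by auto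
  also have "\<dots> = (\<Sum>i\<in>{1..L}. u (f i) *\<^sub>R f i)"
    using sum.reindex[OF basis_inj, of "\<lambda>v. u v *\<^sub>R v"] by simp
  finally have z: "z = (\<Sum>i\<in>{1..L}. u (f i) *\<^sub>R f i)" .
  then have "fs i z = u (f i)" if "i \<in> {1..L}" for i
    using coord_sum[OF that] by simp
  then show ?thesis using z by simp
qed

lemma coord_eq:
  assumes "\<And>i. i \<in> {1..L} \<Longrightarrow> fs i x = fs i y"
  shows "x = y"
  using expansion[of x] expansion[of y] assms by simp

lemma coord_vanishes_on_span:
  assumes "i \<in> {1..L}" "G \<subseteq> {1..L}" "i \<notin> G" "w \<in> span (f ` G)"
  shows "fs i w = 0"
proof (rule linear_eq_0_on_span[OF _ _ assms(4)])
  show "linear (blinfun_apply (fs i))" by (rule bounded_linear.linear[OF blinfun.bounded_linear_right])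
  show "fs i x = 0" if "x \<in> f ` G" for x
    using that biorthogonal[OF assms(1)] assms(2,3) by auto
qed

lemma functional_block_sum:
  assumes J: "finite J" and blocks: "\<forall>j\<in>J. B j \<subseteq> {1..L}"
    and disjoint: "\<forall>j\<in>J. \<forall>j'\<in>J. j \<noteq> j' \<longrightarrow> B j \<inter> B j' = {}"
    and off_blocks: "\<And>i. i \<in> {1..L} \<Longrightarrow> i \<notin> (\<Union>j\<in>J. B j) \<Longrightarrow> blinfun_apply \<phi> (f i) = 0"
  shows "(\<Sum>j\<in>J. \<Sum>i\<in>B j. \<phi> (f i) * fs i u) = \<phi> u"
proof -
  have finite_B: "\<forall>j\<in>J. finite (B j)" using blocks finite_subset by blast
  have "(\<Sum>j\<in>J. \<Sum>i\<in>B j. \<phi> (f i) * fs i u) = (\<Sum>i\<in>(\<Union>j\<in>J. B j). \<phi> (f i) * fs i u)"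
    by (rule sum.UNION_disjoint[OF J finite_B disjoint, symmetric])
  also have "\<dots> = (\<Sum>i\<in>{1..L}. \<phi> (f i) * fs i u)"
    using blocks off_blocks by (intro sum.mono_neutral_left) auto
  also have "\<dots> = \<phi> u"
    by (subst (2) expansion[of u]) (simp add: blinfun.sum_right blinfun.scaleR_right mult.commute)
  finally show ?thesis .
qed

lemma signed_blocks_coord:
  assumes J: "finite J" and blocks: "\<forall>j\<in>J. B j \<subseteq> {1..L}"
    and disjoint: "\<forall>j\<in>J. \<forall>j'\<in>J. j \<noteq> j' \<longrightarrow> B j \<inter> B j' = {}"
    and j: "j \<in> J" and i: "i \<in> B j"
  shows "fs i (\<Sum>j'\<in>J. eps j' *\<^sub>R (\<Sum>i'\<in>B j'. fs i' z *\<^sub>R f i')) = eps j * fs i z"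
proof -
  have iL: "i \<in> {1..L}" using blocks j i by blast
  have "fs i (\<Sum>i'\<in>B j'. fs i' z *\<^sub>R f i') = (if i \<in> B j' then fs i z else 0)" if "j' \<in> J" for j'
    using coord_sum_subset[OF iL] blocks that by simp
  then have "fs i (\<Sum>j'\<in>J. eps j' *\<^sub>R (\<Sum>i'\<in>B j'. fs i' z *\<^sub>R f i'))
      = (\<Sum>j'\<in>J. eps j' * (if i \<in> B j' then fs i z else 0))"
    by (simp add: blinfun.sum_right blinfun.scaleR_right)
  also have "\<dots> = (\<Sum>j'\<in>J. if j' = j then eps j * fs i z else 0)"
    using disjoint j i by (intro sum.cong refl) fastforce
  also have "\<dots> = eps j * fs i z" using J j by simp
  finally show ?thesis .
qed

definition flip :: "nat set \<Rightarrow> 'a \<Rightarrow> 'a" where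
  "flip G z = (\<Sum>i\<in>{1..L}. ((if i \<in> G then -1 else 1) * fs i z) *\<^sub>R f i)"

lemma flip_coord: "i \<in> {1..L} \<Longrightarrow> fs i (flip G z) = (if i \<in> G then -1 else 1) * fs i z"
  unfolding flip_def by (rule coord_sum)

definition on_dyadic_grid :: "nat \<Rightarrow> 'a \<Rightarrow> bool" where
  "on_dyadic_grid k z \<longleftrightarrow> (\<forall>i\<in>{1..L}. \<not> 2 ^ k dvd (i - 1) \<longrightarrow> fs i z = 0)"

lemma flip_bound_of_ubc_bound:
  assumes "ubc_bound f {1..L} K"
  shows "norm (flip G z) \<le> K * norm z"
  using assms[unfolded ubc_bound_def, rule_format, of "\<lambda>i. if i \<in> G then -1 else 1" "\<lambda>i. fs i z"]
    expansion[of z]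
  by (simp add: flip_def)

lemma ubc_bound_exists: "\<exists>K. ubc_bound f {1..L} K"
proof -
  define K where "K = (\<Sum>j\<in>{1..L}. norm (fs j) * norm (f j))"
  have "ubc_bound f {1..L} K"
    unfolding ubc_bound_def
  proof (intro allI impI)
    fix a eps :: "nat \<Rightarrow> real" assume eps: "\<forall>j. eps j \<in> {-1, 1}"
    define x where "x = (\<Sum>j\<in>{1..L}. a j *\<^sub>R f j)"
    have "norm (\<Sum>j\<in>{1..L}. (eps j * a j) *\<^sub>R f j) \<le> (\<Sum>j\<in>{1..L}. norm ((eps j * a j) *\<^sub>R f j))"
      by (rule norm_sum)
    also have "\<dots> = (\<Sum>j\<in>{1..L}. \<bar>fs j x\<bar> * norm (f j))"
    proof (rule sum.cong[OF refl])
      fix j assume j: "j \<in> {1..L}"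
      have "\<bar>eps j\<bar> = 1" using eps[rule_format, of j] by auto
      then show "norm ((eps j * a j) *\<^sub>R f j) = \<bar>fs j x\<bar> * norm (f j)"
        using coord_sum[OF j, of a] by (simp add: x_def abs_mult)
    qed
    also have "\<dots> \<le> (\<Sum>j\<in>{1..L}. norm (fs j) * norm x * norm (f j))"
      using norm_blinfun[of "fs _" x] by (intro sum_mono mult_right_mono) auto
    also have "\<dots> = K * norm x"
      unfolding K_def sum_distrib_right by (intro sum.cong) (auto simp: algebra_simps)
    finally show "norm (\<Sum>j\<in>{1..L}. (eps j * a j) *\<^sub>R f j) \<le> K * norm (\<Sum>j\<in>{1..L}. a j *\<^sub>R f j)"
      by (simp add: x_def)
  qed
  then show ?thesis by blast
qed

lemma dyadic_average:
  assumes z: "on_dyadic_grid (Suc k) z"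
    and z': "\<And>i. i \<in> {1..L} \<Longrightarrow> (i - 1) mod (2 * 2 ^ k) \<noteq> 2 ^ k \<Longrightarrow>
               fs i z' = (-1) ^ (dyadic_block (2 ^ k) (i - 1) - 1) * fs i z"
  shows "on_dyadic_grid k z'"
    and "flip (dyadic_level (Suc k)) z = (1/2) *\<^sub>R (z' + flip (dyadic_level k) z')"
proof -
  define h :: nat where "h = 2 ^ k"
  have h: "h > 0" by (simp add: h_def)
  have z_zero: "fs i z = 0" if "i \<in> {1..L}" "\<not> 2 * h dvd (i - 1)" for i
    using z that by (simp add: on_dyadic_grid_def h_def)
  show "on_dyadic_grid k z'"
    unfolding on_dyadic_grid_def
  proof (intro ballI impI)
    fix i assume i: "i \<in> {1..L}" and off: "\<not> 2 ^ k dvd (i - 1)"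
    have "\<not> 2 * h dvd (i - 1)" using off by (auto simp: h_def intro: dvd_mult_right)
    then show "fs i z' = 0" using z'[OF i off_grid_not_level[OF off]] z_zero[OF i] by simp
  qed
  show "flip (dyadic_level (Suc k)) z = (1/2) *\<^sub>R (z' + flip (dyadic_level k) z')"
  proof (rule coord_eq)
    fix i assume i: "i \<in> {1..L}"
    have rhs: "fs i ((1/2) *\<^sub>R (z' + flip (dyadic_level k) z'))
        = (if i \<in> dyadic_level k then 0 else fs i z')"
      using flip_coord[OF i] by (simp add: blinfun.scaleR_right blinfun.add_right)
    show "fs i (flip (dyadic_level (Suc k)) z) = fs i ((1/2) *\<^sub>R (z' + flip (dyadic_level k) z'))"
    proof (cases "2 * h dvd (i - 1)")
      case True
      then have "i \<notin> dyadic_level k" using dyadic_level_not_grid by (auto simp: h_def)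
      moreover have "(-1) ^ (dyadic_block h (i - 1) - 1) = ((-1) ^ ((i - 1) div (2 * h)) :: real)"
        using dyadic_block_multiple[OF h True] by simp
      moreover have "i \<in> dyadic_level (Suc k) \<longleftrightarrow> odd ((i - 1) div (2 * h))"
        using grid_level_Suc[of k i] True by (simp add: h_def)
      ultimately show ?thesis
        using rhs z'[OF i] flip_coord[OF i] by (auto simp: dyadic_level_def h_def)
    next
      case False
      show ?thesis using rhs z'[OF i] flip_coord[OF i] z_zero[OF i False]
        by (auto simp: dyadic_level_def h_def)
    qed
  qed
qed

end


section \<open>Consequences of a dual skipped 1-unconditional basis\<close>

locale dual_skipped_basis = dual_basis +
  assumes dual_skipped: "skipped_uncond 1 L fs"
begin

lemma skipped_distance_bound:
  fixes m :: "nat \<Rightarrow> nat" and n :: nat and eps :: "nat \<Rightarrow> real"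
  assumes m0: "m 0 = 0" and gaps: "\<forall>j\<in>{1..n}. m (j - 1) + 2 \<le> m j"
    and eps: "\<forall>j. eps j \<in> {-1, 1}"
    and v: "\<forall>j\<in>{1..n}. \<forall>i\<in>skip_block L m j. fs i v = eps j * fs i z"
  shows "Inf {norm (w + v) | w. w \<in> span (f ` ({1..L} - (\<Union>j\<in>{1..n}. skip_block L m j)))} \<le> norm z"
proof -
  define U where "U = (\<Union>j\<in>{1..n}. skip_block L m j)"
  obtain \<phi> :: "'a \<Rightarrow>\<^sub>L real" where \<phi>: "norm \<phi> \<le> 1" "\<forall>w\<in>span (f ` ({1..L} - U)). \<phi> w = 0"
      "\<phi> v = Inf {norm (w + v) | w. w \<in> span (f ` ({1..L} - U))}"
    using distance_functional[OF subspace_span finite_imageI[OF finite_atLeastAtMost] spanning] by blast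
  have disjoint: "\<forall>j\<in>{1..n}. \<forall>j'\<in>{1..n}. j \<noteq> j' \<longrightarrow> skip_block L m j \<inter> skip_block L m j' = {}"
    using gaps by (intro skip_blocks_disjoint) fastforce
  have block_sum: "(\<Sum>j\<in>{1..n}. \<Sum>i\<in>skip_block L m j. \<phi> (f i) * fs i u) = \<phi> u" for u
    by (rule functional_block_sum[OF finite_atLeastAtMost _ disjoint])
      (use \<phi>(2) skip_block_subset in \<open>auto simp: U_def span_base\<close>)
  (* the block restrictions y j of \<phi> are admissible for the skipped unconditionality of fs *)
  define y where "y j = (\<Sum>i\<in>skip_block L m j. \<phi> (f i) *\<^sub>R fs i)" for j
  have sum_y: "(\<Sum>j=1..n. y j) = \<phi>"
    using block_sum by (intro blinfun_eqI) (simp add: y_def blinfun.sum_left blinfun.scaleR_left)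
  have "blinfun_apply (\<Sum>j=1..n. eps j *\<^sub>R y j) z
      = (\<Sum>j\<in>{1..n}. \<Sum>i\<in>skip_block L m j. \<phi> (f i) * (eps j * fs i z))"
    by (simp add: y_def blinfun.sum_left blinfun.scaleR_left sum_distrib_left mult.left_commute)
  also have "\<dots> = (\<Sum>j\<in>{1..n}. \<Sum>i\<in>skip_block L m j. \<phi> (f i) * fs i v)"
    using v by (intro sum.cong refl) simp
  also have "\<dots> = \<phi> v" by (rule block_sum)
  finally have signed_sum_z: "blinfun_apply (\<Sum>j=1..n. eps j *\<^sub>R y j) z = \<phi> v" .
  have "\<forall>j\<in>{1..n}. y j \<in> span (fs ` skip_block L m j)"
    unfolding y_def by (intro ballI span_sum span_scale span_base) auto
  then have "norm (\<Sum>j=1..n. eps j *\<^sub>R y j) \<le> 1 * norm (\<Sum>j=1..n. y j)"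
    using dual_skipped[unfolded skipped_uncond_def, rule_format, of m n y eps] m0 gaps eps
    by (simp add: skip_block_def)
  then have signed_norm: "norm (\<Sum>j=1..n. eps j *\<^sub>R y j) \<le> 1" using sum_y \<phi>(1) by simp
  have "\<phi> v \<le> norm (blinfun_apply (\<Sum>j=1..n. eps j *\<^sub>R y j) z)" using signed_sum_z by simp
  also have "\<dots> \<le> norm (\<Sum>j=1..n. eps j *\<^sub>R y j) * norm z" by (rule norm_blinfun)
  also have "\<dots> \<le> norm z" using signed_norm by (simp add: mult_left_le_one_le)
  finally show ?thesis using \<phi>(3) by (simp add: U_def)
qed

lemma skipped_sign_change:
  fixes m :: "nat \<Rightarrow> nat" and n :: nat and eps :: "nat \<Rightarrow> real"
  assumes m0: "m 0 = 0" and gaps: "\<forall>j\<in>{1..n}. m (j - 1) + 2 \<le> m j"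
    and eps: "\<forall>j. eps j \<in> {-1, 1}" and \<delta>: "\<delta> > 0"
  shows "\<exists>z'. norm z' < norm z + \<delta> \<and> (\<forall>j\<in>{1..n}. \<forall>i\<in>skip_block L m j. fs i z' = eps j * fs i z)"
proof -
  define U where "U = (\<Union>j\<in>{1..n}. skip_block L m j)"
  define W where "W = span (f ` ({1..L} - U))"
  define v where "v = (\<Sum>j\<in>{1..n}. eps j *\<^sub>R (\<Sum>i\<in>skip_block L m j. fs i z *\<^sub>R f i))"
  have disjoint: "\<forall>j\<in>{1..n}. \<forall>j'\<in>{1..n}. j \<noteq> j' \<longrightarrow> skip_block L m j \<inter> skip_block L m j' = {}"
    using gaps by (intro skip_blocks_disjoint) fastforce
  have v_coord: "\<forall>j\<in>{1..n}. \<forall>i\<in>skip_block L m j. fs i v = eps j * fs i z"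
    unfolding v_def using skip_block_subset by (intro ballI signed_blocks_coord[OF finite_atLeastAtMost _ disjoint]) auto
  have inf_less: "Inf {norm (w + v) | w. w \<in> W} < norm z + \<delta>"
    using skipped_distance_bound[OF m0 gaps eps v_coord] \<delta> by (simp add: W_def U_def)
  have nonempty: "{norm (w + v) | w. w \<in> W} \<noteq> {}" using span_zero by (auto simp: W_def)
  obtain w where w: "w \<in> W" "norm (w + v) < norm z + \<delta>"
    using cInf_lessD[OF nonempty inf_less] by blast
  have "fs i w = 0" if i: "i \<in> skip_block L m j" and j: "j \<in> {1..n}" for i j
  proof (rule coord_vanishes_on_span[of i "{1..L} - U"])
    show "i \<in> {1..L}" using i skip_block_subset by blast
    show "i \<notin> {1..L} - U" using i j by (auto simp: U_def)
    show "w \<in> span (f ` ({1..L} - U))" using w(1) by (simp add: W_def)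
  qed blast
  then show ?thesis using w(2) v_coord by (intro exI[of _ "w + v"]) (simp add: blinfun.add_right)
qed

lemma dyadic_sign_change:
  assumes z: "on_dyadic_grid (Suc k) z" and \<delta>: "\<delta> > 0"
  obtains z' where "norm z' < norm z + \<delta>" "on_dyadic_grid k z'"
    "flip (dyadic_level (Suc k)) z = (1/2) *\<^sub>R (z' + flip (dyadic_level k) z')"
proof -
  define h :: nat where "h = 2 ^ k"
  have h: "h > 0" by (simp add: h_def)
  define eps :: "nat \<Rightarrow> real" where "eps j = (-1) ^ (j - 1)" for j
  have "\<forall>j. eps j \<in> {-1, 1}" by (simp add: eps_def minus_one_power_iff)
  moreover have "\<forall>j\<in>{1..L}. dyadic_ends h (j - 1) + 2 \<le> dyadic_ends h j"
    using dyadic_ends_gaps[OF h] by simp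
  moreover have "dyadic_ends h 0 = 0" by (simp add: dyadic_ends_def)
  ultimately obtain z' where z'_norm: "norm z' < norm z + \<delta>"
      and z'_blocks: "\<forall>j\<in>{1..L}. \<forall>i\<in>skip_block L (dyadic_ends h) j. fs i z' = eps j * fs i z"
    using skipped_sign_change[OF _ _ _ \<delta>] by blast
  have "fs i z' = (-1) ^ (dyadic_block h (i - 1) - 1) * fs i z"
    if "i \<in> {1..L}" "(i - 1) mod (2 * h) \<noteq> h" for i
    using z'_blocks dyadic_block_mem[OF h that] by (simp add: eps_def)
  then show ?thesis using that z'_norm dyadic_average[OF z] by (simp add: h_def)
qed

lemma dyadic_flip_step:
  assumes IH: "\<And>z. on_dyadic_grid k z \<Longrightarrow> norm (flip (dyadic_level k) z) \<le> c * norm z"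
    and c: "0 \<le> c" and z: "on_dyadic_grid (Suc k) z"
  shows "norm (flip (dyadic_level (Suc k)) z) \<le> (1 + c) / 2 * norm z"
proof (rule field_le_epsilon)
  fix e :: real assume e: "e > 0"
  define \<delta> where "\<delta> = e / ((1 + c) / 2)"
  have \<delta>: "\<delta> > 0" using e c by (simp add: \<delta>_def)
  obtain z' where z': "norm z' < norm z + \<delta>" "on_dyadic_grid k z'"
      and avg: "flip (dyadic_level (Suc k)) z = (1/2) *\<^sub>R (z' + flip (dyadic_level k) z')"
    using dyadic_sign_change[OF z \<delta>] by blast
  have "norm (flip (dyadic_level (Suc k)) z) \<le> (1/2) * (norm z' + norm (flip (dyadic_level k) z'))"
    unfolding avg using norm_triangle_ineq[of z' "flip (dyadic_level k) z'"] by simp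
  also have "\<dots> \<le> (1/2) * (norm z' + c * norm z')" using IH[OF z'(2)] by simp
  also have "\<dots> = (1 + c) / 2 * norm z'" by (simp add: algebra_simps)
  also have "\<dots> \<le> (1 + c) / 2 * (norm z + \<delta>)" using z'(1) c by (intro mult_left_mono) auto
  also have "\<dots> = (1 + c) / 2 * norm z + e" using c by (simp add: \<delta>_def field_simps)
  finally show "norm (flip (dyadic_level (Suc k)) z) \<le> (1 + c) / 2 * norm z + e" .
qed

lemma dyadic_flip_bound:
  assumes flips: "\<And>G z. norm (flip G z) \<le> K * norm z" and K: "1 \<le> K"
  shows "on_dyadic_grid k z \<Longrightarrow> norm (flip (dyadic_level k) z) \<le> (1 + (K - 1) / 2 ^ k) * norm z"
proof (induction k arbitrary: z)
  case 0
  then show ?case using flips by simp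
next
  case (Suc k)
  have "0 \<le> 1 + (K - 1) / 2 ^ k" using K by simp
  from dyadic_flip_step[OF Suc.IH this Suc.prems]
  show ?case by (simp add: field_simps)
qed

(* Layer 3: for L = 2^N + 1 the level-N flip changes exactly the sign of the last coordinate
   among f 1 and f L, which transfers a bound for the whole basis to the pair. *)
lemma endpoint_ubc_bound:
  assumes L: "L = 2 ^ N + 1" and K: "ubc_bound f {1..L} K"
  shows "ubc_bound f {1, L} (1 + (K - 1) / 2 ^ N)"
proof (rule ubc_bound_pair)
  have ends: "1 \<in> {1..L}" "L \<in> {1..L}" using L by auto
  have K1: "1 \<le> K" using ubc_bound_ge_one[OF K _ ends(1) basis_nonzero[OF ends(1)]] by simp
  show "1 \<noteq> L" using L by simp
  show "1 \<le> 1 + (K - 1) / 2 ^ N" using K1 by simp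
  fix a b :: real
  define x where "x = a *\<^sub>R f 1 + b *\<^sub>R f L"
  have x_coord: "fs i x = (if i = 1 then a else 0) + (if i = L then b else 0)" if "i \<in> {1..L}" for i
    using biorthogonal[OF that] ends by (simp add: x_def blinfun.add_right blinfun.scaleR_right)
  have "on_dyadic_grid N x"
    unfolding on_dyadic_grid_def using x_coord L by auto
  moreover have "flip (dyadic_level N) x = a *\<^sub>R f 1 - b *\<^sub>R f L"
  proof (rule coord_eq)
    fix i assume i: "i \<in> {1..L}"
    have "1 \<notin> dyadic_level N" "L \<in> dyadic_level N" by (simp_all add: dyadic_level_def L)
    then show "fs i (flip (dyadic_level N) x) = fs i (a *\<^sub>R f 1 - b *\<^sub>R f L)"
      using flip_coord[OF i] x_coord[OF i] biorthogonal[OF i] ends L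
      by (auto simp: blinfun.diff_right blinfun.scaleR_right)
  qed
  ultimately show "norm (a *\<^sub>R f 1 - b *\<^sub>R f L) \<le> (1 + (K - 1) / 2 ^ N) * norm (a *\<^sub>R f 1 + b *\<^sub>R f L)"
    using dyadic_flip_bound[OF flip_bound_of_ubc_bound[OF K] K1, of N x] by (simp add: x_def)
qed

end


theorem lemma5p3:
  fixes N :: nat and \<mu> :: real
    and f :: "nat \<Rightarrow> 'a::{real_normed_vector, banach}"
    and fs :: "nat \<Rightarrow> ('a \<Rightarrow>\<^sub>L real)"
  assumes basis_inj: "inj_on f {1..2^N+1}"
    and basis_indep: "independent (f ` {1..2^N+1})"
    and basis_span: "span (f ` {1..2^N+1}) = UNIV"
    and dual: "\<And>k j. k \<in> {1..2^N+1} \<Longrightarrow> j \<in> {1..2^N+1} \<Longrightarrow>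
                  blinfun_apply (fs k) (f j) = (if k = j then 1 else 0)"
    and dual_skipped: "skipped_uncond 1 (2^N+1) fs"
    and mu: "ubc f {1, 2^N+1} = \<mu>"
    and mu_gt: "\<mu> > 1"
  shows "ubc f {1..2^N+1} \<ge> 1 + 2^N * (\<mu> - 1)"
proof -
  interpret dual_skipped_basis "2^N+1" f fs
    using basis_span dual dual_skipped by unfold_locales auto
  show ?thesis
  proof (rule ubc_ge_lower_bound[OF ubc_bound_exists])
    fix K assume K: "ubc_bound f {1..2^N+1} K"
    have "f 1 \<noteq> 0" by (rule basis_nonzero) simp
    then have "ubc f {1, 2^N+1} \<le> 1 + (K - 1) / 2 ^ N"
      by (intro ubc_le_bound[where j = 1, OF endpoint_ubc_bound[OF refl K]]) simp_all
    then show "1 + 2^N * (\<mu> - 1) \<le> K" using mu by (simp add: field_simps)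
  qed
qed

end
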